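(* Let $\mathcal K$ be a quantum channel on $n\times n$ matrices described by Kraus operators $K_1,\dots,K_d\in\mathbb C^{n\times n}$ (with $\mathcal K(\rho)=\sum_j K_j\rho K_j^\dagger$, $\sum_j K_j^\dagger K_j=I_n$). Then $$\cos^{-1}\left[\frac1n\sqrt{\sum_{j=1}^d\lvert\mathrm{Tr}(K_j)\rvert^2}\right]\le\lVert\mathcal K\rVert,$$ with $\cos^{-1}$ taking values in $[0,\pi]$.
   Context: For a unitary matrix $U$ of size $r$ with eigenvalues $e^{i\theta_j}$, $\theta_j\in(-\pi,\pi]$, its time-energy cost is $\lVert U\rVert=\max_{1\le j\le r}|\theta_j|$. For a quantum channel $\mathcal K$ acting on an $n$-dimensional system $A$, its time-energy cost is $\lVert\mathcal K\rVert=\inf_U\lVert U\rVert$, where the infimum is over all finite-dimensional ancilla systems $B$ with a fixed standard state $|0\rangle_B$ and all unitaries $U_{BA}$ on $B\otimes A$ such that $\mathcal K(\rho)=\mathrm{Tr}_B[U_{BA}(|0\rangle_B\langle 0|\otimes\rho_A)U_{BA}^\dagger]$ for all density matrices $\rho$ on $A$. *)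

theory Defs
  imports "HOL-Analysis.Analysis" "Jordan_Normal_Form.Matrix" "Jordan_Normal_Form.Char_Poly"
begin

definition dag :: "complex mat \<Rightarrow> complex mat" where
  "dag A = mat (dim_col A) (dim_row A) (\<lambda>(i,j). cnj (A $$ (j,i)))"

definition mtrace :: "complex mat \<Rightarrow> complex" where
  "mtrace A = (\<Sum>i<dim_row A. A $$ (i,i))"

definition is_unitary :: "nat \<Rightarrow> complex mat \<Rightarrow> bool" where
  "is_unitary N U \<longleftrightarrow> U \<in> carrier_mat N N \<and> dag U * U = 1\<^sub>m N"

definition density :: "nat \<Rightarrow> complex mat \<Rightarrow> bool" where
  "density n \<rho> \<longleftrightarrow> \<rho> \<in> carrier_mat n n \<and> dag \<rho> = \<rho>
     \<and> (\<forall>v \<in> carrier_vec n. 0 \<le> Re (\<Sum>i<n. cnj (v $ i) * (\<rho> *\<^sub>v v) $ i))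
     \<and> mtrace \<rho> = 1"

text \<open>Kronecker product B \<otimes> A of an m x m and an n x n matrix; basis index (b,a) is b*n+a.\<close>
definition kron :: "nat \<Rightarrow> nat \<Rightarrow> complex mat \<Rightarrow> complex mat \<Rightarrow> complex mat" where
  "kron m n X Y = mat (m*n) (m*n) (\<lambda>(i,j). X $$ (i div n, j div n) * Y $$ (i mod n, j mod n))"

definition proj0 :: "nat \<Rightarrow> complex mat" where
  "proj0 m = mat m m (\<lambda>(i,j). if i = 0 \<and> j = 0 then 1 else 0)"

definition ptrace_B :: "nat \<Rightarrow> nat \<Rightarrow> complex mat \<Rightarrow> complex mat" where
  "ptrace_B m n X = mat n n (\<lambda>(a,a'). \<Sum>b<m. X $$ (b*n+a, b*n+a'))"

definition kraus_apply :: "nat \<Rightarrow> complex mat list \<Rightarrow> complex mat \<Rightarrow> complex mat" where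
  "kraus_apply n Ks \<rho> = foldr (\<lambda>K acc. K * \<rho> * dag K + acc) Ks (0\<^sub>m n n)"

definition kraus_channel :: "nat \<Rightarrow> complex mat list \<Rightarrow> bool" where
  "kraus_channel n Ks \<longleftrightarrow> (\<forall>K \<in> set Ks. K \<in> carrier_mat n n)
     \<and> foldr (\<lambda>K acc. dag K * K + acc) Ks (0\<^sub>m n n) = 1\<^sub>m n"

text \<open>Time-energy cost of a unitary: max |theta_j| over eigenvalues e^{i theta_j}, theta_j in (-pi,pi].\<close>
definition unitary_cost :: "complex mat \<Rightarrow> real" where
  "unitary_cost U = Max {abs (Arg z) | z. eigenvalue U z}"

definition channel_cost :: "nat \<Rightarrow> complex mat list \<Rightarrow> real" where
  "channel_cost n Ks = Inf {unitary_cost U | U. \<exists>m>0. is_unitary (m*n) U \<and>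
      (\<forall>\<rho>. density n \<rho> \<longrightarrow> kraus_apply n Ks \<rho> = ptrace_B m n (U * kron m n (proj0 m) \<rho> * dag U))}"

end

theory Submission
  imports Defs "Jordan_Normal_Form.Spectral_Radius"
begin

text \<open>Let U be a unitary on B \<otimes> A realizing the channel, and let U_b be the b-th n x n block
  of its first block column. Comparing the Choi matrices of the Kraus form and of U on pure states
  (and polarizing) gives \<Sum>_j |Tr K_j|^2 = \<Sum>_b |Tr U_b|^2, so |Tr U_0| is at most the square root
  of the left-hand side. Every diagonal entry of a unitary is a convex combination of its
  eigenvalues, so Re U_pp \<ge> cos \<parallel>U\<parallel> and hence n cos \<parallel>U\<parallel> \<le> Re Tr U_0. Since the
  left-hand side is at most n^2 (Cauchy-Schwarz and \<Sum>_j K_j* K_j = 1), applying arccos bounds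
  \<parallel>U\<parallel> for every realization, hence the infimum; realizations exist because the stacked Kraus
  operators form an isometry, which extends to a unitary.\<close>

lemma index_mult_mat_sum:
  assumes "A \<in> carrier_mat a b" "B \<in> carrier_mat b c" "i < a" "j < c"
  shows "(A * B) $$ (i,j) = (\<Sum>l<b. A $$ (i,l) * B $$ (l,j))"
  using assms by (auto simp: scalar_prod_def lessThan_atLeast0 intro!: sum.cong)

lemma row_scalar_prod_col_sum:
  "i < dim_row A \<Longrightarrow> j < dim_col B \<Longrightarrow> dim_col A = dim_row B \<Longrightarrow>
    Matrix.row A i \<bullet> col B j = (\<Sum>l<dim_col A. A $$ (i,l) * B $$ (l,j))"
  by (auto simp: scalar_prod_def lessThan_atLeast0 intro!: sum.cong)

lemma index_mult_mat3_sum: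
  assumes "A \<in> carrier_mat a b" "B \<in> carrier_mat b c" "C \<in> carrier_mat c d" "i < a" "j < d"
  shows "(A * B * C) $$ (i,j) = (\<Sum>l<c. (\<Sum>k<b. A $$ (i,k) * B $$ (k,l)) * C $$ (l,j))"
  by (subst index_mult_mat_sum[of "A*B" a c C d])
    (use assms in \<open>auto simp: row_scalar_prod_col_sum intro!: sum.cong\<close>)

lemma index_mult_mat_vec_sum:
  fixes x :: "'a::comm_semiring_1 vec"
  assumes "A \<in> carrier_mat n m" "x \<in> carrier_vec m" "p < n"
  shows "(A *\<^sub>v x) $ p = (\<Sum>q<m. A $$ (p,q) * x $ q)"
  using assms by (auto simp: scalar_prod_def lessThan_atLeast0 intro!: sum.cong)

lemma nonzero_vec_ex_nonzero_index:
  fixes x :: "'a::zero vec"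
  assumes "x \<in> carrier_vec n" "x \<noteq> 0\<^sub>v n"
  shows "\<exists>i<n. x $ i \<noteq> 0"
  using assms by (metis eq_vecI index_zero_vec carrier_vecD)

lemma sum_swap3:
  "(\<Sum>a\<in>A. \<Sum>b\<in>B. \<Sum>c\<in>C. f a b c) = (\<Sum>b\<in>B. \<Sum>c\<in>C. \<Sum>a\<in>A. f a b c)"
  by (subst sum.swap) (simp add: sum.swap[of _ A C])

lemma sum_delta_mult_left:
  "(\<Sum>k<(N::nat). (if i = k then 1 else 0) * f k) = (if i < N then f i else (0::'a::comm_semiring_1))"
  by (subst sum.cong[OF refl, of _ _ "\<lambda>k. if i = k then f k else 0"]) (auto simp: sum.delta)

lemma sum_delta_mult_right:
  "(\<Sum>k<(N::nat). f k * (if k = j then 1 else 0)) = (if j < N then f j else (0::'a::comm_semiring_1))"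
  by (subst sum.cong[OF refl, of _ _ "\<lambda>k. if k = j then f k else 0"]) (auto simp: sum.delta')

lemma sum_two_points:
  assumes "k \<noteq> l" "k < n" "l < (n::nat)"
  shows "(\<Sum>i<n. f i * (if i = k then a else if i = l then b else 0)) = f k * a + f l * (b::'a::comm_ring_1)"
proof -
  have "(\<Sum>i<n. f i * (if i = k then a else if i = l then b else 0)) =
     (\<Sum>i<n. f i * (if i = k then a else 0)) + (\<Sum>i<n. f i * (if i = l then b else 0))"
    by (subst sum.distrib[symmetric]) (rule sum.cong, use assms in auto)
  also have "\<dots> = f k * a + f l * b" using assms by (simp add: if_distrib cong: if_cong)
  finally show ?thesis .
qed

lemma sum_lessThan_add: "(\<Sum>r<a+b. f r) = (\<Sum>r<a. f r) + (\<Sum>r<(b::nat). f (a + r))"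
  by (induction b) (simp_all add: add_ac)

lemma sum_lessThan_mult_blocks: "(\<Sum>r<d*n. f r) = (\<Sum>j<d. \<Sum>p<(n::nat). f (j*n+p))"
  by (induction d) (simp_all add: add.commute[of n] sum_lessThan_add)

lemma sum_list_nth_lessThan: "(\<Sum>K\<leftarrow>Ks. f K) = (\<Sum>j<length Ks. f (Ks ! j))"
  by (simp add: sum_list_sum_nth atLeast0LessThan)

lemma cnj_mult_self: "cnj z * z = of_real ((cmod z)^2)"
  by (simp add: complex_mult_cnj cmod_power2 mult.commute)

lemma block_index_less: "p < (n::nat) \<Longrightarrow> b * n + p < m * n \<longleftrightarrow> b < m"
proof
  assume "p < n" "b < m"
  then have "b * n + p < Suc b * n" by simp
  also have "\<dots> \<le> m * n" using \<open>b < m\<close> by (intro mult_le_mono1) simp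
  finally show "b * n + p < m * n" .
next
  assume "b * n + p < m * n"
  then have "b * n < m * n" by linarith
  then show "b < m" by simp
qed

lemma dag_carrier[simp]: "A \<in> carrier_mat a b \<Longrightarrow> dag A \<in> carrier_mat b a"
  by (auto simp: dag_def)

lemma dim_dag[simp]: "dim_row (dag A) = dim_col A" "dim_col (dag A) = dim_row A"
  by (auto simp: dag_def)

lemma index_dag[simp]: "i < dim_col A \<Longrightarrow> j < dim_row A \<Longrightarrow> dag A $$ (i,j) = cnj (A $$ (j,i))"
  by (auto simp: dag_def)

lemma dag_mult:
  assumes "A \<in> carrier_mat a b" "B \<in> carrier_mat b c"
  shows "dag (A * B) = dag B * dag A"
proof (rule eq_matI)
  fix i j assume "i < dim_row (dag B * dag A)" "j < dim_col (dag B * dag A)"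
  then have ij: "i < c" "j < a" using assms by auto
  have "dag (A * B) $$ (i, j) = cnj ((A * B) $$ (j,i))" using ij assms by simp
  also have "\<dots> = (\<Sum>l<b. cnj (A $$ (j,l)) * cnj (B $$ (l,i)))"
    using ij assms by (subst index_mult_mat_sum[of _ a b _ c]) auto
  also have "\<dots> = (dag B * dag A) $$ (i, j)" using ij assms
    by (subst index_mult_mat_sum[of _ c b _ a]) (auto simp: mult.commute intro!: sum.cong)
  finally show "dag (A * B) $$ (i, j) = (dag B * dag A) $$ (i, j)" .
qed (use assms in auto)

text \<open>A vector of length N is a function on nat whose values at indices \<ge> N are ignored.\<close>

definition sq_norm :: "(nat \<Rightarrow> complex) \<Rightarrow> nat \<Rightarrow> real" where
  "sq_norm v N = (\<Sum>i<N. (cmod (v i))^2)"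

definition quad_form :: "complex mat \<Rightarrow> (nat \<Rightarrow> complex) \<Rightarrow> nat \<Rightarrow> complex" where
  "quad_form A v N = (\<Sum>i<N. \<Sum>k<N. cnj (v i) * A $$ (i,k) * v k)"

definition mult_mat_fun :: "complex mat \<Rightarrow> (nat \<Rightarrow> complex) \<Rightarrow> nat \<Rightarrow> nat \<Rightarrow> complex" where
  "mult_mat_fun H v N = (\<lambda>p. \<Sum>k<N. H $$ (p,k) * v k)"

lemma sum_cnj_mult_self: "(\<Sum>k<N. cnj (u k) * u k) = of_real (sq_norm u N)"
  unfolding sq_norm_def by (simp add: cnj_mult_self)

lemma sq_norm_Suc: "sq_norm v (Suc N) = (cmod (v 0))^2 + sq_norm (\<lambda>i. v (Suc i)) N"
  unfolding sq_norm_def by (rule sum.lessThan_Suc_shift)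

lemma sq_norm_pos: "i < N \<Longrightarrow> v i \<noteq> 0 \<Longrightarrow> sq_norm v N > 0"
  unfolding sq_norm_def by (rule sum_pos2[of _ i]) auto

lemma sq_norm_delta: "p < N \<Longrightarrow> sq_norm (\<lambda>i. if i = p then 1 else 0) N = 1"
proof -
  assume p: "p < N"
  have "sq_norm (\<lambda>i. if i = p then 1 else 0) N = (\<Sum>i<N. if i = p then 1 else 0)"
    unfolding sq_norm_def by (rule sum.cong) auto
  then show ?thesis using p by simp
qed

lemma quad_form_delta: "p < N \<Longrightarrow> quad_form U (\<lambda>i. if i = p then 1 else 0) N = U $$ (p,p)"
proof -
  assume p: "p < N"
  have "quad_form U (\<lambda>i. if i = p then 1 else 0) N = (\<Sum>i<N. if i = p then U $$ (p,p) else 0)"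
    unfolding quad_form_def by (intro sum.cong refl) (use p in \<open>auto simp: sum_delta_mult_right\<close>)
  then show ?thesis using p by simp
qed

lemma quad_form_conj:
  assumes H: "H \<in> carrier_mat N N" and B: "B \<in> carrier_mat N N"
  shows "quad_form (dag H * B * H) v N = quad_form B (mult_mat_fun H v N) N"
proof -
  have entry: "(dag H * B * H) $$ (i,k) = (\<Sum>q<N. (\<Sum>p<N. cnj (H $$ (p,i)) * B $$ (p,q)) * H $$ (q,k))"
    if "i < N" "k < N" for i k
    using that H B by (simp add: row_scalar_prod_col_sum)
  have "quad_form (dag H * B * H) v N =
      (\<Sum>i<N. \<Sum>k<N. \<Sum>q<N. \<Sum>p<N. cnj (v i) * cnj (H $$ (p,i)) * B $$ (p,q) * H $$ (q,k) * v k)"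
    unfolding quad_form_def by (simp add: entry sum_distrib_left sum_distrib_right mult_ac)
  also have "\<dots> = (\<Sum>i<N. \<Sum>q<N. \<Sum>p<N. \<Sum>k<N. cnj (v i) * cnj (H $$ (p,i)) * B $$ (p,q) * H $$ (q,k) * v k)"
    by (rule sum.cong[OF refl], rule sum_swap3)
  also have "\<dots> = (\<Sum>p<N. \<Sum>q<N. \<Sum>i<N. \<Sum>k<N. cnj (v i) * cnj (H $$ (p,i)) * B $$ (p,q) * H $$ (q,k) * v k)"
    by (subst sum_swap3) (rule sum.swap)
  also have "\<dots> = quad_form B (mult_mat_fun H v N) N"
    unfolding quad_form_def mult_mat_fun_def by (simp add: sum_distrib_left sum_distrib_right mult_ac)
  finally show ?thesis .
qed

lemma quad_form_one: "quad_form (1\<^sub>m N) v N = of_real (sq_norm v N)"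
  unfolding quad_form_def
  by (simp add: sum_cnj_mult_self[symmetric] if_distrib if_distribR sum.delta cong: if_cong)

lemma sq_norm_unitary:
  assumes H: "H \<in> carrier_mat N N" and u: "dag H * H = 1\<^sub>m N"
  shows "sq_norm (mult_mat_fun H v N) N = sq_norm v N"
proof -
  have "dag H * 1\<^sub>m N * H = 1\<^sub>m N" using H u by simp
  then show ?thesis using quad_form_conj[OF H one_carrier_mat, of v] by (simp add: quad_form_one)
qed

lemma eigenvalue_ex_unit_eigenfun:
  assumes U: "U \<in> carrier_mat N N" and ev: "eigenvalue U lam"
  obtains w where "sq_norm w N = 1" "\<And>p. p < N \<Longrightarrow> mult_mat_fun U w N p = lam * w p"
proof -
  obtain x where x: "x \<in> carrier_vec N" "x \<noteq> 0\<^sub>v N" "U *\<^sub>v x = lam \<cdot>\<^sub>v x"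
    using ev U by (auto simp: eigenvalue_def eigenvector_def)
  define nx where "nx = sq_norm (\<lambda>i. x $ i) N"
  obtain i where "i < N" "x $ i \<noteq> 0" using nonzero_vec_ex_nonzero_index[OF x(1,2)] by blast
  then have nx0: "nx > 0" unfolding nx_def by (rule sq_norm_pos)
  define w where "w = (\<lambda>i. x $ i / of_real (sqrt nx))"
  have "sq_norm w N = (\<Sum>i<N. (cmod (x $ i))^2 / nx)"
    unfolding sq_norm_def w_def using nx0 by (simp add: norm_divide power_divide)
  also have "\<dots> = 1" using nx0 by (simp add: sum_divide_distrib[symmetric] nx_def sq_norm_def)
  finally have "sq_norm w N = 1" .
  moreover have "mult_mat_fun U w N p = lam * w p" if p: "p < N" for p
  proof -
    have "(\<Sum>q<N. U $$ (p,q) * x $ q) = lam * x $ p"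
      using arg_cong[OF x(3), of "\<lambda>v. v $ p"] index_mult_mat_vec_sum[OF U x(1) p] p x(1) by simp
    then show ?thesis unfolding w_def mult_mat_fun_def by (simp add: sum_divide_distrib[symmetric])
  qed
  ultimately show ?thesis using that by blast
qed

lemma unitary_eigenvalue_norm:
  assumes U: "U \<in> carrier_mat N N" and uU: "dag U * U = 1\<^sub>m N" and ev: "eigenvalue U l"
  shows "cmod l = 1"
proof -
  obtain w where w1: "sq_norm w N = 1" and Uw: "\<And>p. p < N \<Longrightarrow> mult_mat_fun U w N p = l * w p"
    using eigenvalue_ex_unit_eigenfun[OF U ev] by blast
  have "sq_norm (mult_mat_fun U w N) N = (cmod l)^2 * sq_norm w N"
    unfolding sq_norm_def by (simp add: Uw norm_mult power_mult_distrib sum_distrib_left)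
  then have "(cmod l)^2 = 1" using sq_norm_unitary[OF U uU] w1 by simp
  then show ?thesis using norm_ge_zero[of l] by (auto simp: power2_eq_1_iff)
qed

lemma eigenvalue_similar_mat:
  fixes A B :: "'a::field mat"
  assumes "similar_mat A B" "eigenvalue B l"
  shows "eigenvalue A l"
proof -
  obtain n P Q where "{A,B,P,Q} \<subseteq> carrier_mat n n" using similar_matD[OF assms(1)] by blast
  then have "A \<in> carrier_mat n n" "B \<in> carrier_mat n n" by auto
  then show ?thesis using assms char_poly_similar[OF assms(1)] by (simp add: eigenvalue_root_char_poly)
qed

subsection \<open>Householder reflections and the numerical range of a unitary\<close>

definition householder :: "nat \<Rightarrow> (nat \<Rightarrow> complex) \<Rightarrow> complex mat" where
  "householder N u = mat N N (\<lambda>(i,j). (if i = j then 1 else 0) - 2 * u i * cnj (u j) / of_real (sq_norm u N))"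

lemma householder_carrier[simp]: "householder N u \<in> carrier_mat N N"
  by (simp add: householder_def)

lemma dim_householder[simp]: "dim_row (householder N u) = N" "dim_col (householder N u) = N"
  by (simp_all add: householder_def)

lemma index_householder:
  "i < N \<Longrightarrow> j < N \<Longrightarrow>
    householder N u $$ (i,j) = (if i = j then 1 else 0) - 2 * u i * cnj (u j) / of_real (sq_norm u N)"
  by (simp add: householder_def)

lemma dag_householder: "dag (householder N u) = householder N u"
  by (rule eq_matI) (auto simp: index_householder)

lemma householder_square:
  assumes s: "sq_norm u N \<noteq> 0"
  shows "householder N u * householder N u = 1\<^sub>m N"
proof (rule eq_matI)
  fix i j assume ij: "i < dim_row (1\<^sub>m N)" "j < dim_col (1\<^sub>m N)"
  define s' where "s' = (of_real (sq_norm u N) :: complex)"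
  have s'0: "s' \<noteq> 0" using s by (simp add: s'_def)
  let ?d = "\<lambda>i j. (if i = j then 1 else 0) :: complex"
  have "(householder N u * householder N u) $$ (i,j) =
      (\<Sum>k<N. (?d i k - 2 * u i * cnj (u k) / s') * (?d k j - 2 * u k * cnj (u j) / s'))"
    using ij by (simp add: row_scalar_prod_col_sum index_householder s'_def)
  also have "\<dots> = (\<Sum>k<N. ?d i k * ?d k j) + (\<Sum>k<N. (2 * u i * cnj (u k) / s') * (2 * u k * cnj (u j) / s'))
       - (\<Sum>k<N. (2 * u i * cnj (u k) / s') * ?d k j) - (\<Sum>k<N. ?d i k * (2 * u k * cnj (u j) / s'))"
    by (simp only: sum.distrib[symmetric] sum_subtractf[symmetric] left_diff_distrib right_diff_distrib
        diff_diff_eq2 diff_add_eq)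
  also have "(\<Sum>k<N. (2 * u i * cnj (u k) / s') * (2 * u k * cnj (u j) / s')) =
      4 * u i * cnj (u j) / s'^2 * (\<Sum>k<N. cnj (u k) * u k)"
    by (simp add: sum_distrib_left power2_eq_square algebra_simps sum_divide_distrib)
  also have "(\<Sum>k<N. cnj (u k) * u k) = s'" by (simp add: sum_cnj_mult_self s'_def)
  also have "(\<Sum>k<N. ?d i k * ?d k j) = ?d i j" using ij by (simp only: sum_delta_mult_left) simp
  also have "(\<Sum>k<N. ?d i k * (2 * u k * cnj (u j) / s')) = 2 * u i * cnj (u j) / s'" using ij
    by (simp only: sum_delta_mult_left) simp
  also have "(\<Sum>k<N. (2 * u i * cnj (u k) / s') * ?d k j) = 2 * u i * cnj (u j) / s'" using ij
    by (simp only: sum_delta_mult_right) simp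
  also have "?d i j + 4 * u i * cnj (u j) / s'^2 * s' - 2 * u i * cnj (u j) / s' - 2 * u i * cnj (u j) / s' = ?d i j"
    using s'0 by (simp add: power2_eq_square)
  finally show "(householder N u * householder N u) $$ (i,j) = 1\<^sub>m N $$ (i,j)"
    using ij by simp
qed auto

text \<open>The reflection along u = v + \<sigma> e0, where \<sigma> is the phase of v 0, maps e0 to a
  multiple of v.\<close>
lemma householder_first_column:
  assumes v1: "sq_norm v (Suc N) = 1"
  obtains u t where "sq_norm u (Suc N) \<noteq> 0" "\<And>i. i < Suc N \<Longrightarrow> householder (Suc N) u $$ (i,0) = t * v i"
proof -
  define r where "r = cmod (v 0)"
  define \<sigma> where "\<sigma> = cis (Arg (v 0))"
  define u where "u = (\<lambda>i. if i = 0 then v 0 + \<sigma> else v i)"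
  have r0: "r \<ge> 0" by (simp add: r_def)
  have v0: "v 0 = of_real r * \<sigma>" using rcis_cmod_Arg[of "v 0"] by (simp add: rcis_def r_def \<sigma>_def)
  have cs: "cmod \<sigma> = 1" by (simp add: \<sigma>_def)
  then have ss: "cnj \<sigma> * \<sigma> = 1" by (simp add: cnj_mult_self)
  have u0: "u 0 = of_real (r + 1) * \<sigma>" using v0 by (simp add: u_def algebra_simps)
  have "sq_norm (\<lambda>i. v (Suc i)) N = 1 - r^2" using v1 by (simp add: sq_norm_Suc r_def)
  moreover have "cmod (u 0) = r + 1" using r0 cs by (simp add: u0 norm_mult)
  ultimately have nu: "sq_norm u (Suc N) = 2 + 2 * r"
    by (simp add: sq_norm_Suc u_def power2_eq_square algebra_simps)
  have c: "2 * cnj (u 0) / of_real (sq_norm u (Suc N)) = cnj \<sigma>"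
  proof -
    have d: "(of_real (r + 1) :: complex) \<noteq> 0" using r0 by (simp only: of_real_eq_0_iff)
    have "(of_real (2 + 2 * r) :: complex) = 2 * of_real (r + 1)" by simp
    then have "2 * cnj (u 0) / of_real (sq_norm u (Suc N)) = (2 * of_real (r + 1)) * cnj \<sigma> / (2 * of_real (r + 1))"
      by (simp only: nu u0 complex_cnj_mult complex_cnj_complex_of_real mult.assoc)
    also have "\<dots> = cnj \<sigma>"
      by (rule nonzero_mult_div_cancel_left) (metis d mult_eq_0_iff zero_neq_numeral)
    finally show ?thesis .
  qed
  have "householder (Suc N) u $$ (i,0) = (- cnj \<sigma>) * v i" if i: "i < Suc N" for i
  proof -
    have "householder (Suc N) u $$ (i,0) = (if i = 0 then 1 else 0) - u i * cnj \<sigma>"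
      using i by (simp add: index_householder c[symmetric])
    also have "\<dots> = (- cnj \<sigma>) * v i"
    proof (cases "i = 0")
      case True
      have a: "of_real (r+1) * \<sigma> * cnj \<sigma> = of_real (r+1)" by (metis ss mult.assoc mult.commute mult.right_neutral)
      have b: "cnj \<sigma> * (of_real r * \<sigma>) = of_real r" by (metis ss mult.left_commute mult.right_neutral)
      show ?thesis using True by (simp add: u0 v0 a b del: of_real_add) simp
    qed (simp add: u_def)
    finally show ?thesis .
  qed
  moreover have "sq_norm u (Suc N) \<noteq> 0" using nu r0 by simp
  ultimately show ?thesis using that by blast
qed

lemma unitary_deflation:
  assumes U: "U \<in> carrier_mat (Suc N) (Suc N)" and ev: "eigenvalue U lam"
  obtains H where "H \<in> carrier_mat (Suc N) (Suc N)" "dag H = H" "H * H = 1\<^sub>m (Suc N)"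
    "\<And>i. i < Suc N \<Longrightarrow> (H * U * H) $$ (i,0) = (if i = 0 then lam else 0)"
proof -
  obtain w where w1: "sq_norm w (Suc N) = 1" and Uw: "\<And>p. p < Suc N \<Longrightarrow> mult_mat_fun U w (Suc N) p = lam * w p"
    using eigenvalue_ex_unit_eigenfun[OF U ev] by blast
  obtain u t where u: "sq_norm u (Suc N) \<noteq> 0" and Hc: "\<And>i. i < Suc N \<Longrightarrow> householder (Suc N) u $$ (i,0) = t * w i"
    using householder_first_column[OF w1] by blast
  define H where "H = householder (Suc N) u"
  have H: "H \<in> carrier_mat (Suc N) (Suc N)" by (simp add: H_def)
  have HH: "H * H = 1\<^sub>m (Suc N)" using householder_square[OF u] by (simp add: H_def)
  have Hc': "\<And>i. i < Suc N \<Longrightarrow> H $$ (i,0) = t * w i" using Hc by (simp add: H_def)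
  have col: "(H * U * H) $$ (i,0) = (if i = 0 then lam else 0)" if i: "i < Suc N" for i
  proof -
    have "(H * U * H) $$ (i,0) = (\<Sum>q<Suc N. (\<Sum>p<Suc N. H $$ (i,p) * U $$ (p,q)) * (t * w q))"
      using index_mult_mat3_sum[OF H U H i] by (simp add: Hc' del: sum.lessThan_Suc)
    also have "\<dots> = (\<Sum>p<Suc N. \<Sum>q<Suc N. H $$ (i,p) * t * (U $$ (p,q) * w q))"
      unfolding sum_distrib_right by (subst sum.swap) (simp add: mult_ac del: sum.lessThan_Suc)
    also have "\<dots> = (\<Sum>p<Suc N. H $$ (i,p) * t * (lam * w p))"
      by (simp add: sum_distrib_left[symmetric] Uw[unfolded mult_mat_fun_def] del: sum.lessThan_Suc)
    also have "\<dots> = lam * (\<Sum>p<Suc N. H $$ (i,p) * H $$ (p,0))"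
      by (simp add: Hc' sum_distrib_left mult_ac del: sum.lessThan_Suc)
    also have "(\<Sum>p<Suc N. H $$ (i,p) * H $$ (p,0)) = (H * H) $$ (i,0)"
      using i H by (simp add: row_scalar_prod_col_sum del: sum.lessThan_Suc)
    finally show ?thesis using i by (simp add: HH)
  qed
  show ?thesis by (rule that[OF H _ HH col]) (simp add: H_def dag_householder)
qed

lemma unitary_conj_involution:
  assumes H: "H \<in> carrier_mat N N" "dag H = H" "H * H = 1\<^sub>m N"
    and U: "U \<in> carrier_mat N N" "dag U * U = 1\<^sub>m N"
  shows "dag (H * U * H) * (H * U * H) = 1\<^sub>m N" "U = H * (H * U * H) * H"
proof -
  have HHX: "H * (H * X) = X" if "X \<in> carrier_mat N k" for X k
    using that H by (simp add: assoc_mult_mat[symmetric, of _ N N _ N _ k])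
  have UUX: "dag U * (U * X) = X" if "X \<in> carrier_mat N k" for X k
    using that U by (simp add: assoc_mult_mat[symmetric, of _ N N _ N _ k])
  have "dag (H * U * H) = H * (dag U * H)"
    using H U by (simp add: dag_mult[of _ N N _ N] assoc_mult_mat[of _ N N _ N _ N] mult_carrier_mat[of _ N N _ N])
  then have "dag (H * U * H) * (H * U * H) = H * (dag U * (H * (H * (U * H))))"
    using H U by (simp add: assoc_mult_mat[of _ N N _ N _ N] mult_carrier_mat[of _ N N _ N])
  then show "dag (H * U * H) * (H * U * H) = 1\<^sub>m N" using H U by (simp add: HHX[of _ N] UUX[of _ N])
  have "H * (H * U * H) * H = H * (H * (U * (H * H)))"
    using H U by (simp add: assoc_mult_mat[of _ N N _ N _ N] mult_carrier_mat[of _ N N _ N])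
  then show "U = H * (H * U * H) * H" using H U by (simp add: HHX[of _ N])
qed

lemma unitary_first_column:
  assumes B: "B \<in> carrier_mat (Suc N) (Suc N)" and dB: "dag B * B = 1\<^sub>m (Suc N)"
    and col: "\<And>i. i < Suc N \<Longrightarrow> B $$ (i,0) = (if i = 0 then lam else 0)"
  shows "cmod lam = 1" "\<And>j. j < N \<Longrightarrow> B $$ (0, Suc j) = 0"
proof -
  have BdB: "B * dag B = 1\<^sub>m (Suc N)"
    by (rule mat_mult_left_right_inverse[OF _ B dB]) (use B in simp)
  have "(\<Sum>k<Suc N. cnj (B $$ (k,0)) * B $$ (k,0)) = 1"
    using arg_cong[OF dB, of "\<lambda>M. M $$ (0,0)"] B by (simp add: row_scalar_prod_col_sum)
  moreover have "(\<Sum>k<Suc N. cnj (B $$ (k,0)) * B $$ (k,0)) = cnj lam * lam"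
    by (simp add: col if_distrib if_distribR cong: if_cong)
  ultimately have "(cmod lam)^2 = 1" by (metis cnj_mult_self of_real_eq_1_iff)
  then show lam: "cmod lam = 1" using norm_ge_zero[of lam] by (auto simp: power2_eq_1_iff)
  have "(\<Sum>k<Suc N. cnj (B $$ (0,k)) * B $$ (0,k)) = 1"
    using arg_cong[OF BdB, of "\<lambda>M. M $$ (0,0)"] B by (simp add: row_scalar_prod_col_sum mult.commute)
  then have "sq_norm (\<lambda>k. B $$ (0,k)) (Suc N) = 1"
    by (metis sum_cnj_mult_self of_real_eq_1_iff)
  then have "sq_norm (\<lambda>k. B $$ (0, Suc k)) N = 0" using lam by (simp add: sq_norm_Suc col)
  then show "B $$ (0, Suc j) = 0" if "j < N" for j
    using that unfolding sq_norm_def by (simp add: sum_nonneg_eq_0_iff)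
qed

definition lower_block :: "complex mat \<Rightarrow> nat \<Rightarrow> complex mat" where
  "lower_block B N = mat N N (\<lambda>(i,j). B $$ (Suc i, Suc j))"

lemma lower_block_carrier[simp]: "lower_block B N \<in> carrier_mat N N"
  by (simp add: lower_block_def)

lemma dim_lower_block[simp]: "dim_row (lower_block B N) = N" "dim_col (lower_block B N) = N"
  by (simp_all add: lower_block_def)

lemma lower_block_unitary:
  assumes B: "B \<in> carrier_mat (Suc N) (Suc N)" and dB: "dag B * B = 1\<^sub>m (Suc N)"
    and row: "\<And>j. j < N \<Longrightarrow> B $$ (0, Suc j) = 0"
  shows "dag (lower_block B N) * lower_block B N = 1\<^sub>m N"
proof (rule eq_matI)
  fix i j assume "i < dim_row (1\<^sub>m N)" "j < dim_col (1\<^sub>m N)"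
  then have ij: "i < N" "j < N" by auto
  have "(dag (lower_block B N) * lower_block B N) $$ (i,j) = (\<Sum>k<N. cnj (B $$ (Suc k, Suc i)) * B $$ (Suc k, Suc j))"
    by (subst index_mult_mat_sum[of _ N N _ N]) (use ij in \<open>auto simp: lower_block_def intro!: sum.cong\<close>)
  also have "\<dots> = (\<Sum>k<Suc N. cnj (B $$ (k, Suc i)) * B $$ (k, Suc j))"
    by (simp only: sum.lessThan_Suc_shift) (simp add: row[OF ij(1)])
  also have "\<dots> = (dag B * B) $$ (Suc i, Suc j)"
    using ij B by (simp add: row_scalar_prod_col_sum)
  finally show "(dag (lower_block B N) * lower_block B N) $$ (i,j) = 1\<^sub>m N $$ (i,j)"
    using ij by (simp add: dB)
qed auto

lemma eigenvalue_lower_block: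
  assumes B: "B \<in> carrier_mat (Suc N) (Suc N)" and row: "\<And>j. j < N \<Longrightarrow> B $$ (0, Suc j) = 0"
    and ev: "eigenvalue (lower_block B N) mu"
  shows "eigenvalue B mu"
proof -
  obtain y where y: "y \<in> carrier_vec N" "y \<noteq> 0\<^sub>v N" "lower_block B N *\<^sub>v y = mu \<cdot>\<^sub>v y"
    using ev by (auto simp: eigenvalue_def eigenvector_def lower_block_def)
  define z where "z = vec (Suc N) (\<lambda>i. if i = 0 then 0 else y $ (i - 1))"
  have z: "z \<in> carrier_vec (Suc N)" by (simp add: z_def)
  have "B *\<^sub>v z = mu \<cdot>\<^sub>v z"
  proof (rule eq_vecI)
    fix i assume "i < dim_vec (mu \<cdot>\<^sub>v z)"
    then have i: "i < Suc N" by (simp add: z_def)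
    have "(B *\<^sub>v z) $ i = (\<Sum>k<N. B $$ (i, Suc k) * y $ k)"
      using index_mult_mat_vec_sum[OF B z i] by (simp only: sum.lessThan_Suc_shift) (simp add: z_def)
    also have "\<dots> = (mu \<cdot>\<^sub>v z) $ i"
    proof (cases i)
      case 0 then show ?thesis using row by (simp add: z_def)
    next
      case (Suc i')
      then have i': "i' < N" using i by simp
      have "(\<Sum>k<N. B $$ (i, Suc k) * y $ k) = (lower_block B N *\<^sub>v y) $ i'"
        using index_mult_mat_vec_sum[OF lower_block_carrier y(1) i'] i' by (simp add: lower_block_def Suc)
      then show ?thesis using Suc i' y by (simp add: z_def)
    qed
    finally show "(B *\<^sub>v z) $ i = (mu \<cdot>\<^sub>v z) $ i" .
  qed (use B in \<open>simp add: z_def\<close>)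
  moreover have "z \<noteq> 0\<^sub>v (Suc N)"
  proof
    assume "z = 0\<^sub>v (Suc N)"
    have "y $ i = z $ Suc i" if "i < N" for i using that by (simp add: z_def)
    then have "y $ i = 0" if "i < N" for i using that \<open>z = 0\<^sub>v (Suc N)\<close> by simp
    then show False using nonzero_vec_ex_nonzero_index[OF y(1,2)] by blast
  qed
  ultimately show ?thesis unfolding eigenvalue_def eigenvector_def using z B by (intro exI[of _ z]) auto
qed

lemma quad_form_lower_block:
  assumes col: "\<And>i. i < Suc N \<Longrightarrow> B $$ (i,0) = (if i = 0 then lam else 0)"
    and row: "\<And>j. j < N \<Longrightarrow> B $$ (0, Suc j) = 0"
  shows "quad_form B y (Suc N) = lam * (cnj (y 0) * y 0) + quad_form (lower_block B N) (\<lambda>i. y (Suc i)) N"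
  unfolding quad_form_def using col row
  by (simp only: sum.lessThan_Suc_shift) (simp add: lower_block_def mult_ac)

text \<open>Induction on the dimension, deflating along an eigenvector with a Householder reflection.\<close>
lemma unitary_quad_form_lower_bound:
  assumes "U \<in> carrier_mat N N" "dag U * U = 1\<^sub>m N" "\<And>l. eigenvalue U l \<Longrightarrow> c \<le> Re l"
  shows "c * sq_norm v N \<le> Re (quad_form U v N)"
  using assms
proof (induction N arbitrary: U v)
  case 0 then show ?case by (simp add: sq_norm_def quad_form_def)
next
  case (Suc N)
  note U = Suc.prems(1) and uU = Suc.prems(2) and evc = Suc.prems(3)
  obtain lam where ev: "eigenvalue U lam" using spectrum_non_empty[OF U] by (auto simp: spectrum_def)
  obtain H where H: "H \<in> carrier_mat (Suc N) (Suc N)" "dag H = H" "H * H = 1\<^sub>m (Suc N)"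
    and col: "\<And>i. i < Suc N \<Longrightarrow> (H * U * H) $$ (i,0) = (if i = 0 then lam else 0)"
    using unitary_deflation[OF U ev] by blast
  define B where "B = H * U * H"
  have B: "B \<in> carrier_mat (Suc N) (Suc N)" using H U by (simp add: B_def)
  have dB: "dag B * B = 1\<^sub>m (Suc N)" and UB: "U = H * B * H"
    unfolding B_def by (rule unitary_conj_involution[OF H U uU])+
  have col: "\<And>i. i < Suc N \<Longrightarrow> B $$ (i,0) = (if i = 0 then lam else 0)" using col by (simp add: B_def)
  note row = unitary_first_column(2)[OF B dB col]
  have "similar_mat U B" by (rule similar_matI[of _ _ H H "Suc N"]) (use U B H UB in auto)
  then have "c \<le> Re l" if "eigenvalue (lower_block B N) l" for l
    using evc eigenvalue_similar_mat eigenvalue_lower_block[OF B row that] by blast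
  then have IH: "c * sq_norm y N \<le> Re (quad_form (lower_block B N) y N)" for y
    using Suc.IH[OF lower_block_carrier lower_block_unitary[OF B dB row]] by blast
  define y where "y = mult_mat_fun H v (Suc N)"
  have "quad_form U v (Suc N) = quad_form B y (Suc N)"
    unfolding y_def using quad_form_conj[OF H(1) B] UB H(2) by simp
  then have "Re (quad_form U v (Suc N)) = Re lam * (cmod (y 0))^2 + Re (quad_form (lower_block B N) (\<lambda>i. y (Suc i)) N)"
    by (simp add: quad_form_lower_block[OF col row] cnj_mult_self)
  moreover have "sq_norm v (Suc N) = (cmod (y 0))^2 + sq_norm (\<lambda>i. y (Suc i)) N"
    unfolding y_def sq_norm_Suc[symmetric] by (rule sq_norm_unitary[OF H(1), symmetric]) (simp add: H)
  moreover have "c * (cmod (y 0))^2 \<le> Re lam * (cmod (y 0))^2"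
    using evc[OF ev] by (simp add: mult_right_mono)
  ultimately show ?case using IH[of "\<lambda>i. y (Suc i)"] by (simp add: distrib_left)
qed

lemma unitary_cost_bounds:
  assumes U: "U \<in> carrier_mat N N" and N: "N > 0"
  shows "0 \<le> unitary_cost U" "unitary_cost U \<le> pi"
    "\<And>l. eigenvalue U l \<Longrightarrow> \<bar>Arg l\<bar> \<le> unitary_cost U"
proof -
  have E: "{\<bar>Arg z\<bar> | z. eigenvalue U z} = (\<lambda>z. \<bar>Arg z\<bar>) ` spectrum U" by (auto simp: spectrum_def)
  have fin: "finite {\<bar>Arg z\<bar> | z. eigenvalue U z}" unfolding E using card_finite_spectrum(1)[OF U] by simp
  have "{\<bar>Arg z\<bar> | z. eigenvalue U z} \<noteq> {}" unfolding E using spectrum_non_empty[OF U N] by simp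
  then have "unitary_cost U \<in> {\<bar>Arg z\<bar> | z. eigenvalue U z}"
    unfolding unitary_cost_def using fin by (rule Max_in[rotated])
  then obtain z where "unitary_cost U = \<bar>Arg z\<bar>" by blast
  then show "0 \<le> unitary_cost U" "unitary_cost U \<le> pi" using Arg_bounded[of z] by auto
  show "\<bar>Arg l\<bar> \<le> unitary_cost U" if "eigenvalue U l" for l
    unfolding unitary_cost_def using fin that by (intro Max_ge) auto
qed

lemma cos_unitary_cost_le_diag:
  assumes U: "U \<in> carrier_mat N N" and uU: "dag U * U = 1\<^sub>m N" and p: "p < N"
  shows "cos (unitary_cost U) \<le> Re (U $$ (p,p))"
proof -
  have N: "N > 0" using p by simp
  have "cos (unitary_cost U) \<le> Re l" if ev: "eigenvalue U l" for l
  proof -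
    have "l \<noteq> 0" "cmod l = 1" using unitary_eigenvalue_norm[OF U uU ev] by auto
    have "cos (unitary_cost U) \<le> cos \<bar>Arg l\<bar>"
      by (rule cos_monotone_0_pi_le) (use unitary_cost_bounds[OF U N] ev in auto)
    also have "\<dots> = Re l" using cos_Arg[OF \<open>l \<noteq> 0\<close>] \<open>cmod l = 1\<close> by simp
    finally show ?thesis .
  qed
  from unitary_quad_form_lower_bound[OF U uU this, of "\<lambda>i. if i = p then 1 else 0"]
  show ?thesis using p by (simp add: sq_norm_delta quad_form_delta)
qed

subsection \<open>Kraus channels and their dilations\<close>

lemma kraus_apply_carrier:
  assumes "\<forall>K\<in>set Ks. K \<in> carrier_mat n n" and "\<rho> \<in> carrier_mat n n"
  shows "kraus_apply n Ks \<rho> \<in> carrier_mat n n"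
  using assms by (induction Ks) (auto simp: kraus_apply_def)

lemma index_kraus_apply:
  assumes Ks: "\<forall>K\<in>set Ks. K \<in> carrier_mat n n" and r: "\<rho> \<in> carrier_mat n n"
    and pq: "p < n" "q < n"
  shows "kraus_apply n Ks \<rho> $$ (p,q) = (\<Sum>K\<leftarrow>Ks. \<Sum>k<n. \<Sum>l<n. K $$ (p,k) * \<rho> $$ (k,l) * cnj (K $$ (q,l)))"
  using Ks
proof (induction Ks)
  case (Cons K Ks)
  then have K: "K \<in> carrier_mat n n" by simp
  have "(K * \<rho> * dag K) $$ (p,q) = (\<Sum>l<n. \<Sum>k<n. K $$ (p,k) * \<rho> $$ (k,l) * cnj (K $$ (q,l)))"
    using index_mult_mat3_sum[OF K r dag_carrier[OF K] pq] K pq by (auto intro!: sum.cong simp: sum_distrib_right)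
  also have "\<dots> = (\<Sum>k<n. \<Sum>l<n. K $$ (p,k) * \<rho> $$ (k,l) * cnj (K $$ (q,l)))"
    by (rule sum.swap)
  moreover have "K * \<rho> * dag K \<in> carrier_mat n n" using K r by (meson mult_carrier_mat dag_carrier)
  ultimately show ?case
    using Cons kraus_apply_carrier[OF _ r, of Ks] pq by (simp add: kraus_apply_def)
qed (simp add: kraus_apply_def pq)

lemma kraus_sum_carrier:
  assumes "\<forall>K\<in>set Ks. K \<in> carrier_mat n n"
  shows "foldr (\<lambda>K acc. dag K * K + acc) Ks (0\<^sub>m n n) \<in> carrier_mat n n"
  using assms by (induction Ks) auto

lemma index_kraus_sum:
  assumes Ks: "\<forall>K\<in>set Ks. K \<in> carrier_mat n n" and aa: "a < n" "a' < n"
  shows "foldr (\<lambda>K acc. dag K * K + acc) Ks (0\<^sub>m n n) $$ (a,a') =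
    (\<Sum>K\<leftarrow>Ks. \<Sum>k<n. cnj (K $$ (k,a)) * K $$ (k,a'))"
  using Ks
proof (induction Ks)
  case (Cons K Ks)
  then have K: "K \<in> carrier_mat n n" by simp
  have "(dag K * K) $$ (a,a') = (\<Sum>k<n. cnj (K $$ (k,a)) * K $$ (k,a'))"
    by (subst index_mult_mat_sum[of _ n n _ n]) (use K aa in \<open>auto intro!: sum.cong\<close>)
  then show ?case using Cons K kraus_sum_carrier[of Ks n] aa by simp
qed (simp add: aa)

lemma index_kron_proj0:
  assumes "r < m*n" "s < m*n"
  shows "kron m n (proj0 m) \<rho> $$ (r,s) = (if r < n \<and> s < n then \<rho> $$ (r,s) else 0)"
proof -
  have "r div n < m" "s div n < m" using assms by (auto simp: less_mult_imp_div_less)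
  then show ?thesis using assms by (auto simp: kron_def proj0_def div_eq_0_iff)
qed

lemma index_conj_kron_proj0:
  assumes U: "U \<in> carrier_mat (m*n) (m*n)" and "0 < m" and xy: "x < m*n" "y < m*n"
  shows "(U * kron m n (proj0 m) \<rho> * dag U) $$ (x,y) =
    (\<Sum>k<n. \<Sum>l<n. U $$ (x,k) * \<rho> $$ (k,l) * cnj (U $$ (y,l)))"
proof -
  define R where "R = kron m n (proj0 m) \<rho>"
  have R: "R \<in> carrier_mat (m*n) (m*n)" by (simp add: R_def kron_def)
  have nm: "n \<le> m * n" using \<open>0 < m\<close> by simp
  have restrict: "(\<Sum>i<m*n. f i) = (\<Sum>i<n. f i)" if "\<And>i. n \<le> i \<Longrightarrow> i < m*n \<Longrightarrow> f i = 0"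
    for f :: "nat \<Rightarrow> complex"
    using nm that by (intro sum.mono_neutral_right) auto
  have R_low: "R $$ (r,s) = \<rho> $$ (r,s)" if "r < n" "s < n" for r s
    using index_kron_proj0[of r m n s \<rho>] that nm by (simp add: R_def)
  have "(U * R * dag U) $$ (x,y) = (\<Sum>s<m*n. (\<Sum>r<m*n. U $$ (x,r) * R $$ (r,s)) * dag U $$ (s,y))"
    by (rule index_mult_mat3_sum) (use U R xy in auto)
  also have "\<dots> = (\<Sum>s<n. (\<Sum>r<m*n. U $$ (x,r) * R $$ (r,s)) * dag U $$ (s,y))"
    by (rule restrict) (simp add: R_def index_kron_proj0)
  also have "\<dots> = (\<Sum>s<n. (\<Sum>r<n. U $$ (x,r) * \<rho> $$ (r,s)) * cnj (U $$ (y,s)))"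
  proof (rule sum.cong[OF refl])
    fix s assume "s \<in> {..<n}"
    then have s: "s < n" "s < m*n" using nm by (auto intro: less_le_trans)
    have "(\<Sum>r<m*n. U $$ (x,r) * R $$ (r,s)) = (\<Sum>r<n. U $$ (x,r) * \<rho> $$ (r,s))"
      using s by (subst restrict) (auto simp: R_def index_kron_proj0 R_low[unfolded R_def])
    then show "(\<Sum>r<m*n. U $$ (x,r) * R $$ (r,s)) * dag U $$ (s,y) =
        (\<Sum>r<n. U $$ (x,r) * \<rho> $$ (r,s)) * cnj (U $$ (y,s))"
      using U s xy by simp
  qed
  also have "\<dots> = (\<Sum>k<n. \<Sum>l<n. U $$ (x,k) * \<rho> $$ (k,l) * cnj (U $$ (y,l)))"
    unfolding sum_distrib_right by (rule sum.swap)
  finally show ?thesis by (simp add: R_def)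
qed

lemma ptrace_dilation_index:
  assumes U: "U \<in> carrier_mat (m*n) (m*n)" and p: "p < n" and q: "q < n"
  shows "ptrace_B m n (U * kron m n (proj0 m) \<rho> * dag U) $$ (p,q) =
    (\<Sum>b<m. \<Sum>k<n. \<Sum>l<n. U $$ (b*n+p,k) * \<rho> $$ (k,l) * cnj (U $$ (b*n+q,l)))"
  using p q index_conj_kron_proj0[OF U]
  by (cases "m = 0") (simp_all add: ptrace_B_def block_index_less)

subsection \<open>Pure states and polarization\<close>

definition pure_state :: "(nat \<Rightarrow> complex) \<Rightarrow> nat \<Rightarrow> complex mat" where
  "pure_state v n = mat n n (\<lambda>(i,j). v i * cnj (v j))"

lemma density_pure_state:
  assumes v1: "sq_norm v n = 1"
  shows "density n (pure_state v n)"
  unfolding density_def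
proof (intro conjI ballI)
  show "pure_state v n \<in> carrier_mat n n" by (simp add: pure_state_def)
  show "dag (pure_state v n) = pure_state v n" by (rule eq_matI) (auto simp: pure_state_def)
  have "mtrace (pure_state v n) = (\<Sum>i<n. cnj (v i) * v i)"
    by (simp add: mtrace_def pure_state_def mult.commute)
  then show "mtrace (pure_state v n) = 1" by (simp add: sum_cnj_mult_self v1)
  fix w :: "complex vec" assume w: "w \<in> carrier_vec n"
  define S where "S = (\<Sum>j<n. cnj (v j) * w $ j)"
  have "(pure_state v n *\<^sub>v w) $ i = v i * S" if "i < n" for i
    using index_mult_mat_vec_sum[of "pure_state v n" n n w i] w that
    by (simp add: pure_state_def S_def sum_distrib_left mult.assoc)
  then have "(\<Sum>i<n. cnj (w $ i) * (pure_state v n *\<^sub>v w) $ i) = cnj S * S"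
    by (simp add: S_def sum_distrib_right mult_ac)
  then show "0 \<le> Re (\<Sum>i<n. cnj (w $ i) * (pure_state v n *\<^sub>v w) $ i)"
    by (simp add: cnj_mult_self)
qed

definition sesq_form :: "(nat \<Rightarrow> nat \<Rightarrow> complex) \<Rightarrow> (nat \<Rightarrow> complex) \<Rightarrow> nat \<Rightarrow> complex" where
  "sesq_form C v n = (\<Sum>k<n. \<Sum>l<n. C k l * v k * cnj (v l))"

lemma sesq_form_delta:
  assumes "j < n"
  shows "sesq_form C (\<lambda>i. if i = j then 1 else 0) n = C j j"
proof -
  have "sesq_form C (\<lambda>i. if i = j then 1 else 0) n = (\<Sum>k<n. if k = j then C j j else 0)"
    unfolding sesq_form_def
    by (intro sum.cong refl) (simp add: sum_delta_mult_right assms if_distrib[of cnj] cong: if_cong)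
  then show ?thesis using assms by simp
qed

lemma sesq_form_two_points:
  assumes kl: "k \<noteq> l" "k < n" "l < n"
  shows "sesq_form C (\<lambda>i. if i = k then a else if i = l then b else 0) n =
    C k k * a * cnj a + C k l * a * cnj b + C l k * b * cnj a + C l l * b * cnj b"
proof -
  let ?v = "\<lambda>i. if i = k then a else if i = l then b else 0"
  have "(\<Sum>j<n. C i j * ?v i * cnj (?v j)) = (C i k * cnj a + C i l * cnj b) * ?v i" for i
  proof -
    have "(\<Sum>j<n. C i j * ?v i * cnj (?v j)) =
        (\<Sum>j<n. (C i j * ?v i) * (if j = k then cnj a else if j = l then cnj b else 0))"
      by (rule sum.cong) auto
    also have "\<dots> = C i k * ?v i * cnj a + C i l * ?v i * cnj b" by (rule sum_two_points[OF kl])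
    finally show ?thesis by (simp add: algebra_simps)
  qed
  then have "sesq_form C ?v n = (\<Sum>i<n. (C i k * cnj a + C i l * cnj b) * ?v i)"
    unfolding sesq_form_def by simp
  also have "\<dots> = (C k k * cnj a + C k l * cnj b) * a + (C l k * cnj a + C l l * cnj b) * b"
    by (rule sum_two_points[OF kl])
  finally show ?thesis by (simp add: algebra_simps)
qed

lemma sq_norm_two_points:
  assumes kl: "k \<noteq> l" "k < n" "l < n"
  shows "sq_norm (\<lambda>i. if i = k then a else if i = l then b else 0) n = (cmod a)^2 + (cmod b)^2"
proof -
  let ?v = "\<lambda>i. if i = k then a else if i = l then b else 0"
  have "of_real (sq_norm ?v n) = (\<Sum>i<n. cnj (?v i) * (if i = k then a else if i = l then b else 0))"
    by (simp add: sum_cnj_mult_self)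
  also have "\<dots> = cnj (?v k) * a + cnj (?v l) * b" by (rule sum_two_points[OF kl])
  also have "\<dots> = of_real ((cmod a)^2 + (cmod b)^2)" using kl by (simp add: cnj_mult_self)
  finally show ?thesis by (simp only: of_real_eq_iff)
qed

text \<open>Polarization with the unit test vectors e k, (e k + e l)/\<surd>2 and (e k + \<i> e l)/\<surd>2.\<close>
lemma sesq_form_eq_zero_coeff:
  assumes zero: "\<And>v. sq_norm v n = 1 \<Longrightarrow> sesq_form C v n = 0" and k: "k < n" and l: "l < n"
  shows "C k l = 0"
proof -
  have diag: "C j j = 0" if "j < n" for j
    using zero[OF sq_norm_delta] sesq_form_delta that by metis
  show ?thesis
  proof (cases "k = l")
    case False
    define s where "s = complex_of_real (1 / sqrt 2)"
    have cs: "cnj s = s" and s0: "s \<noteq> 0" by (simp_all add: s_def)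
    have r2: "(1 / sqrt 2) * (1 / sqrt 2) = (1/2::real)"
      by (simp flip: power2_eq_square add: power_divide)
    have ss: "s * s = 1/2" unfolding s_def of_real_mult[symmetric] r2 by simp
    have ms: "(cmod s)^2 = 1/2" unfolding s_def norm_of_real power2_abs using r2 by (simp only: power2_eq_square)
    have "C k l * s * cnj s + C l k * s * cnj s = 0"
      using zero[of "\<lambda>i. if i = k then s else if i = l then s else 0"]
      by (simp add: sesq_form_two_points sq_norm_two_points False k l diag ms)
    then have e1: "C k l + C l k = 0" using s0 by (simp add: cs ss flip: distrib_right)
    have "C k l * s * cnj (\<i> * s) + C l k * (\<i> * s) * cnj s = 0"
      using zero[of "\<lambda>i. if i = k then s else if i = l then \<i> * s else 0"]
      by (simp add: sesq_form_two_points sq_norm_two_points False k l diag ms norm_mult)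
    then have "\<i> * (C l k - C k l) * (s * s) = 0" by (simp add: cs algebra_simps)
    then have e2: "C l k - C k l = 0" by (simp add: ss)
    show ?thesis using e1 e2 by (simp add: algebra_simps)
  qed (use diag k in simp)
qed

lemma sum_sesq_form:
  "(\<Sum>j\<in>J. \<Sum>k<n. \<Sum>l<n. X j k * (v k * cnj (v l)) * Y j l) = sesq_form (\<lambda>k l. \<Sum>j\<in>J. X j k * Y j l) v n"
proof -
  have "(\<Sum>j\<in>J. \<Sum>k<n. \<Sum>l<n. X j k * (v k * cnj (v l)) * Y j l) =
      (\<Sum>k<n. \<Sum>l<n. \<Sum>j\<in>J. X j k * (v k * cnj (v l)) * Y j l)"
    by (rule sum_swap3)
  then show ?thesis by (simp add: sesq_form_def sum_distrib_left mult_ac)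
qed

subsection \<open>The trace bound for a realizing unitary\<close>

text \<open>The Choi matrices of the Kraus form and of the dilation agree; we only need their entries
  indexed by (p,p),(q,q).\<close>
lemma dilation_diagonal_products:
  assumes Ks: "\<forall>K\<in>set Ks. K \<in> carrier_mat n n" and U: "U \<in> carrier_mat (m*n) (m*n)"
    and dil: "\<And>\<rho>. density n \<rho> \<Longrightarrow> kraus_apply n Ks \<rho> = ptrace_B m n (U * kron m n (proj0 m) \<rho> * dag U)"
    and p: "p < n" and q: "q < n"
  shows "(\<Sum>j<length Ks. (Ks!j) $$ (p,p) * cnj ((Ks!j) $$ (q,q))) =
    (\<Sum>b<m. U $$ (b*n+p,p) * cnj (U $$ (b*n+q,q)))"
proof -
  define A where "A k l = (\<Sum>j<length Ks. (Ks!j) $$ (p,k) * cnj ((Ks!j) $$ (q,l)))" for k l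
  define B where "B k l = (\<Sum>b<m. U $$ (b*n+p,k) * cnj (U $$ (b*n+q,l)))" for k l
  have "A p q - B p q = 0"
  proof (rule sesq_form_eq_zero_coeff[of _ "\<lambda>k l. A k l - B k l", OF _ p q])
    fix v assume "sq_norm v n = 1"
    then have "kraus_apply n Ks (pure_state v n) $$ (p,q) =
        ptrace_B m n (U * kron m n (proj0 m) (pure_state v n) * dag U) $$ (p,q)"
      using dil density_pure_state by simp
    moreover have "kraus_apply n Ks (pure_state v n) $$ (p,q) =
        (\<Sum>j<length Ks. \<Sum>k<n. \<Sum>l<n. (Ks!j) $$ (p,k) * (v k * cnj (v l)) * cnj ((Ks!j) $$ (q,l)))"
      using index_kraus_apply[OF Ks _ p q, of "pure_state v n"] by (simp add: pure_state_def sum_list_nth_lessThan)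
    moreover have "ptrace_B m n (U * kron m n (proj0 m) (pure_state v n) * dag U) $$ (p,q) =
        (\<Sum>b<m. \<Sum>k<n. \<Sum>l<n. U $$ (b*n+p,k) * (v k * cnj (v l)) * cnj (U $$ (b*n+q,l)))"
      using ptrace_dilation_index[OF U p q, of "pure_state v n"] by (simp add: pure_state_def)
    ultimately have "sesq_form A v n = sesq_form B v n"
      unfolding A_def B_def by (simp only: sum_sesq_form)
    then show "sesq_form (\<lambda>k l. A k l - B k l) v n = 0"
      by (simp add: sesq_form_def left_diff_distrib sum_subtractf)
  qed
  then show ?thesis by (simp add: A_def B_def)
qed

lemma sum_cmod_mtrace_sq_dilation:
  assumes Ks: "\<forall>K\<in>set Ks. K \<in> carrier_mat n n" and U: "U \<in> carrier_mat (m*n) (m*n)"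
    and dil: "\<And>\<rho>. density n \<rho> \<Longrightarrow> kraus_apply n Ks \<rho> = ptrace_B m n (U * kron m n (proj0 m) \<rho> * dag U)"
  shows "(\<Sum>K\<leftarrow>Ks. (cmod (mtrace K))\<^sup>2) = (\<Sum>b<m. (cmod (\<Sum>p<n. U $$ (b*n+p, p)))^2)"
proof -
  let ?d = "length Ks"
  have trace: "mtrace (Ks ! j) = (\<Sum>p<n. (Ks!j) $$ (p,p))" if "j < ?d" for j
  proof -
    have "Ks ! j \<in> carrier_mat n n" using Ks nth_mem[OF that] by blast
    then show ?thesis by (simp add: mtrace_def)
  qed
  have "complex_of_real (\<Sum>K\<leftarrow>Ks. (cmod (mtrace K))\<^sup>2) = (\<Sum>j<?d. mtrace (Ks!j) * cnj (mtrace (Ks!j)))"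
    by (simp only: sum_list_nth_lessThan of_real_sum complex_norm_square)
  also have "\<dots> = (\<Sum>j<?d. \<Sum>p<n. \<Sum>q<n. (Ks!j) $$ (p,p) * cnj ((Ks!j) $$ (q,q)))"
    by (intro sum.cong refl) (simp only: lessThan_iff trace cnj_sum sum_product)
  also have "\<dots> = (\<Sum>p<n. \<Sum>q<n. \<Sum>j<?d. (Ks!j) $$ (p,p) * cnj ((Ks!j) $$ (q,q)))"
    by (rule sum_swap3)
  also have "\<dots> = (\<Sum>p<n. \<Sum>q<n. \<Sum>b<m. U $$ (b*n+p,p) * cnj (U $$ (b*n+q,q)))"
    by (intro sum.cong refl dilation_diagonal_products[OF Ks U dil]) auto
  also have "\<dots> = (\<Sum>b<m. \<Sum>p<n. \<Sum>q<n. U $$ (b*n+p,p) * cnj (U $$ (b*n+q,q)))"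
    by (rule sum_swap3[symmetric])
  also have "\<dots> = complex_of_real (\<Sum>b<m. (cmod (\<Sum>p<n. U $$ (b*n+p, p)))^2)"
    by (simp only: of_real_sum complex_norm_square cnj_sum sum_product)
  finally show ?thesis by (simp only: of_real_eq_iff)
qed

lemma cmod_mtrace_sq_le:
  assumes K: "K \<in> carrier_mat n n"
  shows "(cmod (mtrace K))^2 \<le> real n * (\<Sum>p<n. \<Sum>k<n. (cmod (K $$ (k,p)))^2)"
proof -
  have "cmod (mtrace K) \<le> (\<Sum>p<n. cmod (K $$ (p,p)))"
    using K norm_sum[of "\<lambda>p. K $$ (p,p)" "{..<n}"] by (simp add: mtrace_def)
  then have "(cmod (mtrace K))^2 \<le> (\<Sum>p<n. cmod (K $$ (p,p)))^2" by (simp add: power_mono)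
  also have "\<dots> \<le> real n * (\<Sum>p<n. (cmod (K $$ (p,p)))^2)"
    using sum_squared_le_sum_of_squares[of "\<lambda>p. cmod (K $$ (p,p))" "{..<n}"] by (simp add: mult.commute)
  also have "\<dots> \<le> real n * (\<Sum>p<n. \<Sum>k<n. (cmod (K $$ (k,p)))^2)"
    by (intro mult_left_mono sum_mono member_le_sum) auto
  finally show ?thesis .
qed

lemma kraus_channel_sum_cmod_mtrace_sq_le:
  assumes "kraus_channel n Ks"
  shows "(\<Sum>K\<leftarrow>Ks. (cmod (mtrace K))\<^sup>2) \<le> real n * real n"
proof -
  have Ks: "\<forall>K\<in>set Ks. K \<in> carrier_mat n n"
    and sum1: "foldr (\<lambda>K acc. dag K * K + acc) Ks (0\<^sub>m n n) = 1\<^sub>m n"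
    using assms by (auto simp: kraus_channel_def)
  have column: "(\<Sum>K\<leftarrow>Ks. \<Sum>k<n. (cmod (K $$ (k,p)))^2) = 1" if p: "p < n" for p
  proof -
    have "complex_of_real (\<Sum>K\<leftarrow>Ks. \<Sum>k<n. (cmod (K $$ (k,p)))^2) =
        (\<Sum>K\<leftarrow>Ks. \<Sum>k<n. cnj (K $$ (k,p)) * K $$ (k,p))"
      by (simp only: sum_list_nth_lessThan of_real_sum cnj_mult_self)
    also have "\<dots> = 1" using index_kraus_sum[OF Ks p p] p by (simp add: sum1)
    finally show ?thesis by (simp only: of_real_eq_1_iff)
  qed
  have "(\<Sum>K\<leftarrow>Ks. (cmod (mtrace K))\<^sup>2) \<le> (\<Sum>K\<leftarrow>Ks. real n * (\<Sum>p<n. \<Sum>k<n. (cmod (K $$ (k,p)))^2))"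
    using Ks by (intro sum_list_mono cmod_mtrace_sq_le) auto
  also have "\<dots> = real n * (\<Sum>p<n. \<Sum>K\<leftarrow>Ks. \<Sum>k<n. (cmod (K $$ (k,p)))^2)"
    by (simp add: sum_list_nth_lessThan sum_distrib_left[symmetric] sum.swap[of _ "{..<n}" "{..<length Ks}"])
  also have "\<dots> = real n * real n" by (simp add: column)
  finally show ?thesis .
qed

lemma arccos_le_unitary_cost:
  assumes n: "n > 0" and Ksc: "kraus_channel n Ks" and m: "m > 0" and Uu: "is_unitary (m*n) U"
    and dil: "\<And>\<rho>. density n \<rho> \<Longrightarrow> kraus_apply n Ks \<rho> = ptrace_B m n (U * kron m n (proj0 m) \<rho> * dag U)"
  shows "arccos ((1 / real n) * sqrt (\<Sum>K\<leftarrow>Ks. (cmod (mtrace K))\<^sup>2)) \<le> unitary_cost U"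
proof -
  have Ks: "\<forall>K\<in>set Ks. K \<in> carrier_mat n n" using Ksc by (simp add: kraus_channel_def)
  have U: "U \<in> carrier_mat (m*n) (m*n)" and uU: "dag U * U = 1\<^sub>m (m*n)"
    using Uu by (auto simp: is_unitary_def)
  define T where "T = (\<Sum>K\<leftarrow>Ks. (cmod (mtrace K))\<^sup>2)"
  define \<theta> where "\<theta> = unitary_cost U"
  have "real n * cos \<theta> = (\<Sum>p<n. cos \<theta>)" by simp
  also have "\<dots> \<le> (\<Sum>p<n. Re (U $$ (0*n+p, p)))"
    by (intro sum_mono) (use cos_unitary_cost_le_diag[OF U uU] block_index_less[of _ n 0 m] m in \<open>auto simp: \<theta>_def\<close>)
  also have "\<dots> \<le> cmod (\<Sum>p<n. U $$ (0*n+p, p))" by (simp add: complex_Re_le_cmod flip: Re_sum)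
  also have "\<dots> \<le> sqrt T"
  proof (rule real_le_rsqrt)
    show "(cmod (\<Sum>p<n. U $$ (0*n+p, p)))^2 \<le> T"
      using m sum_cmod_mtrace_sq_dilation[OF Ks U dil]
        member_le_sum[of 0 "{..<m}" "\<lambda>b. (cmod (\<Sum>p<n. U $$ (b*n+p, p)))^2"]
      by (simp add: T_def)
  qed
  finally have "cos \<theta> \<le> (1 / real n) * sqrt T" using n by (simp add: field_simps)
  moreover have "(1 / real n) * sqrt T \<le> 1"
  proof -
    have "sqrt T \<le> sqrt (real n * real n)"
      using kraus_channel_sum_cmod_mtrace_sq_le[OF Ksc] unfolding T_def by (rule real_sqrt_le_mono)
    then show ?thesis using n by (simp add: field_simps)
  qed
  ultimately have "arccos ((1 / real n) * sqrt T) \<le> arccos (cos \<theta>)"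
    by (intro arccos_le_arccos) auto
  also have "\<dots> = \<theta>" using unitary_cost_bounds[OF U] m n by (simp add: \<theta>_def arccos_cos)
  finally show ?thesis by (simp add: T_def \<theta>_def)
qed

subsection \<open>Existence of a realizing unitary\<close>

text \<open>For an isometry V (an N x n matrix with V* V = 1), the block matrix
  [[V, 1 - V V*], [0, V*]] is unitary.\<close>
definition isometry_dilation :: "(nat \<Rightarrow> nat \<Rightarrow> complex) \<Rightarrow> nat \<Rightarrow> nat \<Rightarrow> nat \<Rightarrow> nat \<Rightarrow> complex" where
  "isometry_dilation V N n i j =
    (if j < n then (if i < N then V i j else 0)
     else if i < N then (if i = j - n then 1 else 0) - (\<Sum>a<n. V i a * cnj (V (j - n) a))
     else cnj (V (j - n) (i - N)))"

context
  fixes V :: "nat \<Rightarrow> nat \<Rightarrow> complex" and N n :: nat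
  assumes isometry: "\<And>a a'. a < n \<Longrightarrow> a' < n \<Longrightarrow> (\<Sum>r<N. cnj (V r a) * V r a') = (if a = a' then 1 else 0)"
begin

lemma isometry_mult_adjoint:
  assumes "j < N" "i < n"
  shows "(\<Sum>r<N. cnj (V r i) * (\<Sum>a<n. V r a * cnj (V j a))) = cnj (V j i)"
proof -
  have "(\<Sum>r<N. cnj (V r i) * (\<Sum>a<n. V r a * cnj (V j a))) = (\<Sum>a<n. (\<Sum>r<N. cnj (V r i) * V r a) * cnj (V j a))"
    by (simp add: sum_distrib_left sum_distrib_right mult.assoc sum.swap[of _ "{..<n}"])
  also have "\<dots> = cnj (V j i)" using assms by (simp add: isometry sum_delta_mult_left)
  finally show ?thesis .
qed

lemma isometry_dilation_inner_old_new:
  assumes i: "i < n" and j: "n \<le> j" "j < N + n"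
  shows "(\<Sum>r<N + n. cnj (isometry_dilation V N n r i) * isometry_dilation V N n r j) = 0"
proof -
  have "(\<Sum>r<N. cnj (isometry_dilation V N n r i) * isometry_dilation V N n r j) =
      (\<Sum>r<N. cnj (V r i) * (if r = j - n then 1 else 0)) - (\<Sum>r<N. cnj (V r i) * (\<Sum>a<n. V r a * cnj (V (j - n) a)))"
    using i j by (simp add: isometry_dilation_def right_diff_distrib sum_subtractf)
  also have "\<dots> = 0" using i j by (simp add: sum_delta_mult_right isometry_mult_adjoint)
  finally show ?thesis using i by (simp add: sum_lessThan_add isometry_dilation_def)
qed

lemma isometry_dilation_inner_new_new:
  assumes i: "n \<le> i" "i < N + n" and j: "n \<le> j" "j < N + n"
  shows "(\<Sum>r<N + n. cnj (isometry_dilation V N n r i) * isometry_dilation V N n r j) = (if i = j then 1 else 0)"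
proof -
  define i' j' where "i' = i - n" and "j' = j - n"
  have ij': "i' < N" "j' < N" using i j by (auto simp: i'_def j'_def)
  define d :: "nat \<Rightarrow> nat \<Rightarrow> complex" where "d x y = (if x = y then 1 else 0)" for x y
  define A where "A r = (\<Sum>a<n. V i' a * cnj (V r a))" for r
  define B where "B r = (\<Sum>b<n. V r b * cnj (V j' b))" for r
  define M where "M = (\<Sum>a<n. V i' a * cnj (V j' a))"
  have d_left: "(\<Sum>r<N. d x r * f r) = f x" if "x < N" for x f
    using that by (simp add: d_def sum_delta_mult_left)
  have d_right: "(\<Sum>r<N. f r * d r y) = f y" if "y < N" for y f
    using that by (simp add: d_def sum_delta_mult_right)
  have AB: "(\<Sum>r<N. A r * B r) = M"
  proof -
    have "(\<Sum>r<N. A r * B r) = (\<Sum>r<N. \<Sum>a<n. \<Sum>b<n. V i' a * (cnj (V r a) * V r b) * cnj (V j' b))"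
      unfolding A_def B_def by (simp only: sum_product) (simp add: mult_ac)
    also have "\<dots> = (\<Sum>a<n. \<Sum>b<n. \<Sum>r<N. V i' a * (cnj (V r a) * V r b) * cnj (V j' b))"
      by (rule sum_swap3)
    also have "\<dots> = (\<Sum>a<n. \<Sum>b<n. V i' a * (if a = b then 1 else 0) * cnj (V j' b))"
      by (intro sum.cong refl) (simp add: isometry sum_distrib_left[symmetric] sum_distrib_right[symmetric])
    also have "\<dots> = M" unfolding M_def
      by (intro sum.cong refl) (simp add: if_distrib if_distribR sum.delta cong: if_cong)
    finally show ?thesis .
  qed
  have "(\<Sum>r<N. cnj (isometry_dilation V N n r i) * isometry_dilation V N n r j) =
      (\<Sum>r<N. (d i' r - A r) * (d r j' - B r))"
    using i j by (intro sum.cong refl) (simp add: isometry_dilation_def i'_def j'_def d_def A_def B_def mult.commute)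
  also have "\<dots> = (\<Sum>r<N. d i' r * d r j') - (\<Sum>r<N. d i' r * B r) - (\<Sum>r<N. A r * d r j') + (\<Sum>r<N. A r * B r)"
    by (simp add: algebra_simps sum.distrib sum_subtractf)
  also have "\<dots> = d i' j' - M"
    using ij' by (simp add: d_left d_right AB) (simp add: A_def B_def M_def)
  finally have "(\<Sum>r<N. cnj (isometry_dilation V N n r i) * isometry_dilation V N n r j) = d i' j' - M" .
  moreover have "(\<Sum>s<n. cnj (isometry_dilation V N n (N + s) i) * isometry_dilation V N n (N + s) j) = M"
    using i j by (simp add: isometry_dilation_def M_def i'_def j'_def)
  moreover have "d i' j' = (if i = j then 1 else 0)" using i j by (auto simp: d_def i'_def j'_def)
  ultimately show ?thesis by (simp add: sum_lessThan_add)
qed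

lemma isometry_dilation_orthonormal:
  assumes i: "i < N + n" and j: "j < N + n"
  shows "(\<Sum>r<N + n. cnj (isometry_dilation V N n r i) * isometry_dilation V N n r j) = (if i = j then 1 else 0)"
proof -
  have sym: "(\<Sum>r<N + n. cnj (isometry_dilation V N n r i) * isometry_dilation V N n r j) =
      cnj (\<Sum>r<N + n. cnj (isometry_dilation V N n r j) * isometry_dilation V N n r i)"
    by (simp add: mult.commute)
  consider "i < n" "j < n" | "i < n" "n \<le> j" | "n \<le> i" "j < n" | "n \<le> i" "n \<le> j" by linarith
  then show ?thesis
  proof cases
    case 1
    then show ?thesis by (simp add: sum_lessThan_add isometry_dilation_def isometry)
  next
    case 2
    then show ?thesis using isometry_dilation_inner_old_new j by simp
  next
    case 3
    then show ?thesis using isometry_dilation_inner_old_new[of j i] i sym by simp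
  qed (use isometry_dilation_inner_new_new i j in simp)
qed

lemma isometry_dilation_unitary:
  "is_unitary (N + n) (mat (N + n) (N + n) (\<lambda>(i,j). isometry_dilation V N n i j))"
  unfolding is_unitary_def
proof (intro conjI eq_matI)
  fix i j assume "i < dim_row (1\<^sub>m (N + n))" "j < dim_col (1\<^sub>m (N + n))"
  then have ij: "i < N + n" "j < N + n" by auto
  then have "(dag (mat (N + n) (N + n) (\<lambda>(i,j). isometry_dilation V N n i j)) *
      mat (N + n) (N + n) (\<lambda>(i,j). isometry_dilation V N n i j)) $$ (i,j) =
      (\<Sum>r<N + n. cnj (isometry_dilation V N n r i) * isometry_dilation V N n r j)"
    by (subst index_mult_mat_sum[of _ "N + n" "N + n" _ "N + n"]) (auto intro!: sum.cong)
  then show "(dag (mat (N + n) (N + n) (\<lambda>(i,j). isometry_dilation V N n i j)) *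
      mat (N + n) (N + n) (\<lambda>(i,j). isometry_dilation V N n i j)) $$ (i,j) = 1\<^sub>m (N + n) $$ (i,j)"
    using isometry_dilation_orthonormal[OF ij] ij by simp
qed auto

end

lemma stacked_kraus_isometry:
  assumes Ks: "\<forall>K\<in>set Ks. K \<in> carrier_mat n n" and sum1: "foldr (\<lambda>K acc. dag K * K + acc) Ks (0\<^sub>m n n) = 1\<^sub>m n"
    and a: "a < n" "a' < n"
  shows "(\<Sum>r<length Ks * n. cnj ((Ks ! (r div n)) $$ (r mod n, a)) * (Ks ! (r div n)) $$ (r mod n, a')) =
    (if a = a' then 1 else 0)"
proof -
  have "(\<Sum>r<length Ks * n. cnj ((Ks ! (r div n)) $$ (r mod n, a)) * (Ks ! (r div n)) $$ (r mod n, a')) =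
      (\<Sum>j<length Ks. \<Sum>p<n. cnj ((Ks!j) $$ (p,a)) * (Ks!j) $$ (p,a'))"
    unfolding sum_lessThan_mult_blocks by (intro sum.cong refl) simp
  also have "\<dots> = foldr (\<lambda>K acc. dag K * K + acc) Ks (0\<^sub>m n n) $$ (a,a')"
    using index_kraus_sum[OF Ks a] by (simp add: sum_list_nth_lessThan)
  finally show ?thesis using a by (simp add: sum1)
qed

text \<open>Stacking the Kraus operators gives an isometry from A into B \<otimes> A with a (length Ks)-dimensional
  ancilla B; its unitary dilation needs one extra ancilla level, which holds the lower block row.\<close>
lemma kraus_channel_dilation_exists:
  assumes Ksc: "kraus_channel n Ks"
  shows "\<exists>m>0. \<exists>U. is_unitary (m*n) U \<and>
    (\<forall>\<rho>. density n \<rho> \<longrightarrow> kraus_apply n Ks \<rho> = ptrace_B m n (U * kron m n (proj0 m) \<rho> * dag U))"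
proof -
  have Ks: "\<forall>K\<in>set Ks. K \<in> carrier_mat n n" and sum1: "foldr (\<lambda>K acc. dag K * K + acc) Ks (0\<^sub>m n n) = 1\<^sub>m n"
    using Ksc by (auto simp: kraus_channel_def)
  define d where "d = length Ks"
  define m where "m = Suc d"
  define V where "V r a = (Ks ! (r div n)) $$ (r mod n, a)" for r a
  have mn: "m * n = d * n + n" by (simp add: m_def)
  define U where "U = mat (m*n) (m*n) (\<lambda>(i,j). isometry_dilation V (d*n) n i j)"
  have U: "U \<in> carrier_mat (m*n) (m*n)" by (simp add: U_def)
  have unitary: "is_unitary (m*n) U"
    unfolding U_def mn by (rule isometry_dilation_unitary[OF stacked_kraus_isometry[OF Ks sum1, folded d_def V_def]])
  have channel: "kraus_apply n Ks \<rho> = ptrace_B m n (U * kron m n (proj0 m) \<rho> * dag U)" if "density n \<rho>" for \<rho>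
  proof (rule eq_matI)
    have r: "\<rho> \<in> carrier_mat n n" using that by (simp add: density_def)
    fix p q assume "p < dim_row (ptrace_B m n (U * kron m n (proj0 m) \<rho> * dag U))"
      "q < dim_col (ptrace_B m n (U * kron m n (proj0 m) \<rho> * dag U))"
    then have pq: "p < n" "q < n" by (auto simp: ptrace_B_def)
    have U_block: "U $$ (b*n+p', k) = (if b < d then (Ks ! b) $$ (p',k) else 0)" if "b < m" "p' < n" "k < n" for b p' k
    proof -
      have "b*n+p' < m*n" using that by (simp add: block_index_less)
      moreover have "k < m*n" using that mn by simp
      ultimately have "U $$ (b*n+p', k) = isometry_dilation V (d*n) n (b*n+p') k" by (simp add: U_def)
      moreover have "V (b*n+p') k = (Ks ! b) $$ (p',k)" using that by (simp add: V_def)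
      ultimately show ?thesis using that by (simp add: isometry_dilation_def block_index_less)
    qed
    have "ptrace_B m n (U * kron m n (proj0 m) \<rho> * dag U) $$ (p,q) =
        (\<Sum>b<m. if b < d then (\<Sum>k<n. \<Sum>l<n. (Ks!b) $$ (p,k) * \<rho> $$ (k,l) * cnj ((Ks!b) $$ (q,l))) else 0)"
      unfolding ptrace_dilation_index[OF U pq] using pq by (intro sum.cong refl) (auto simp: U_block)
    also have "\<dots> = kraus_apply n Ks \<rho> $$ (p,q)"
      by (simp add: index_kraus_apply[OF Ks r pq] sum_list_nth_lessThan m_def d_def)
    finally show "kraus_apply n Ks \<rho> $$ (p,q) = ptrace_B m n (U * kron m n (proj0 m) \<rho> * dag U) $$ (p,q)" ..
  qed (use kraus_apply_carrier[OF Ks] that in \<open>auto simp: ptrace_B_def density_def\<close>)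
  show ?thesis using unitary channel by (intro exI[of _ m] conjI exI[of _ U] allI impI) (auto simp: m_def)
qed

theorem theorem2:
  fixes n :: nat and Ks :: "complex mat list"
  assumes "n > 0" and "kraus_channel n Ks"
  shows "arccos ((1 / real n) * sqrt (\<Sum>K\<leftarrow>Ks. (cmod (mtrace K))\<^sup>2)) \<le> channel_cost n Ks"
  unfolding channel_cost_def
proof (rule cInf_greatest)
  show "{unitary_cost U |U. \<exists>m>0. is_unitary (m * n) U \<and>
      (\<forall>\<rho>. density n \<rho> \<longrightarrow> kraus_apply n Ks \<rho> = ptrace_B m n (U * kron m n (proj0 m) \<rho> * dag U))} \<noteq> {}"
    using kraus_channel_dilation_exists[OF assms(2)] by auto
next
  fix c assume "c \<in> {unitary_cost U |U. \<exists>m>0. is_unitary (m * n) U \<and>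
      (\<forall>\<rho>. density n \<rho> \<longrightarrow> kraus_apply n Ks \<rho> = ptrace_B m n (U * kron m n (proj0 m) \<rho> * dag U))}"
  then obtain U m where c: "c = unitary_cost U" and m: "m > 0" and U: "is_unitary (m*n) U"
    and dil: "\<forall>\<rho>. density n \<rho> \<longrightarrow> kraus_apply n Ks \<rho> = ptrace_B m n (U * kron m n (proj0 m) \<rho> * dag U)"
    by blast
  show "arccos ((1 / real n) * sqrt (\<Sum>K\<leftarrow>Ks. (cmod (mtrace K))\<^sup>2)) \<le> c"
    unfolding c by (rule arccos_le_unitary_cost[OF assms m U]) (use dil in blast)
qed

end
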